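(* For every positive integer $n$, the number $b_n$ of inequivalent binary rooted trees with $n$ leaves equals $$b_n = \sum_\lambda \frac{\prod_{i=2}^{\ell(\lambda)} \left(2(\lambda_i+\cdots+\lambda_{\ell(\lambda)})-1\right)}{z_\lambda},$$ where the sum is over all binary partitions $\lambda=(\lambda_1\ge\cdots\ge\lambda_{\ell(\lambda)})$ of $n$.
   Context: A binary rooted tree is a rooted tree in which every vertex has either $0$ or $2$ children (leaves have none). Two such trees are equivalent if there is a graph isomorphism between them mapping root to root; $b_n$ is the number of equivalence classes of binary rooted trees with $n$ leaves. A partition is binary if all its parts are powers of $2$ (with $1=2^0$ allowed); $\ell(\lambda)$ is the number of parts. For a binary partition $\lambda$ with $m_i$ parts equal to $2^i$ ($i=0,\dots,j$), $z_\lambda=\prod_{i=0}^{j}(2^i)^{m_i}\,m_i!$. *)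

theory Defs
  imports Complex_Main
begin

text \<open>Binary rooted trees: every vertex has 0 or 2 children.  Represented as
  plane trees; rooted isomorphism = equivalence up to swapping children at
  any vertex.\<close>

datatype btree = Leaf | Node btree btree

fun leaves :: "btree \<Rightarrow> nat" where
  "leaves Leaf = 1"
| "leaves (Node l r) = leaves l + leaves r"

inductive tree_iso :: "btree \<Rightarrow> btree \<Rightarrow> bool" where
  iso_leaf: "tree_iso Leaf Leaf"
| iso_straight: "tree_iso l l' \<Longrightarrow> tree_iso r r' \<Longrightarrow> tree_iso (Node l r) (Node l' r')"
| iso_swap: "tree_iso l r' \<Longrightarrow> tree_iso r l' \<Longrightarrow> tree_iso (Node l r) (Node l' r')"

definition b :: "nat \<Rightarrow> nat" where
  "b n = card ({t. leaves t = n} // {(s, t). tree_iso s t})"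

definition binary_partitions :: "nat \<Rightarrow> nat list set" where
  "binary_partitions n = {lam. sorted_wrt (\<ge>) lam \<and> (\<forall>p\<in>set lam. \<exists>k. p = 2 ^ k)
                               \<and> sum_list lam = n}"

definition mult :: "nat list \<Rightarrow> nat \<Rightarrow> nat" where
  "mult lam i = count_list lam (2 ^ i)"

text \<open>z_lambda = prod_i (2^i)^{m_i} m_i!; indices i with 2^i > |lambda| have m_i = 0.\<close>
definition z :: "nat list \<Rightarrow> nat" where
  "z lam = (\<Prod>i\<in>{0..sum_list lam}. (2 ^ i) ^ mult lam i * fact (mult lam i))"

end

theory Submission
  imports Defs "HOL-Computational_Algebra.Formal_Power_Series" "HOL-Library.Nat_Bijection"
begin

text \<open>
  Ordering the two subtrees of every node by a numeric code picks a canonical tree in each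
  isomorphism class; counting canonical trees gives
  \<open>2 b(n) = \<Sum>\<^sub>k b(k) b(n - k) + [n even] b(n/2)\<close> for \<open>n \<ge> 2\<close>, i.e.\ the series
  \<open>S = 1 - \<Sum> b(n) x^n\<close> satisfies \<open>S(x)^2 + 2x = S(x^2)\<close>.
  Put \<open>W = S - 2x S'\<close> and \<open>W_t = W S^(-(t+1))\<close>.  Then \<open>W(x) S(x) = W(x^2)\<close> and
  \<open>S(x)^2 = S(x^2) (1 - 2x / S(x^2))\<close>, and expanding the last factor binomially expresses the
  coefficients of \<open>W_t\<close> through those of the \<open>W_(t/2+m)\<close> at half the degree.
  Splitting a binary partition into its parts equal to 1 and the halves of its other parts shows
  that \<open>\<Sum>\<^sub>\<lambda> \<Prod>\<^sub>i (2(\<lambda>_i + \<dots> + \<lambda>_\<ell>) + t) / z_\<lambda>\<close>, summed over the binary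
  partitions of \<open>n\<close>, satisfies the same recursion and hence equals \<open>[x^n] W_t\<close>.
  At \<open>t = -1\<close> this coefficient is \<open>(2n - 1) b(n)\<close>, and \<open>2n - 1\<close> is the factor \<open>i = 1\<close>
  of every product.
\<close>

section \<open>Canonical binary trees\<close>

fun btree_code :: "btree \<Rightarrow> nat" where
  "btree_code Leaf = 0"
| "btree_code (Node l r) = Suc (prod_encode (btree_code l, btree_code r))"

lemma btree_code_inj: "btree_code s = btree_code t \<Longrightarrow> s = t"
proof (induction s arbitrary: t)
  case Leaf thus ?case by (cases t) auto
next
  case (Node l r) thus ?case by (cases t) (auto simp: prod_encode_eq)
qed

fun canon :: "btree \<Rightarrow> btree" where
  "canon Leaf = Leaf"
| "canon (Node l r) =
     (if btree_code (canon l) \<le> btree_code (canon r) then Node (canon l) (canon r)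
      else Node (canon r) (canon l))"

lemma leaves_ge_1: "leaves t \<ge> 1"
  by (induction t) auto

lemma leaves_canon: "leaves (canon t) = leaves t"
  by (induction t) auto

lemma tree_iso_canon: "tree_iso t (canon t)"
  by (induction t) (auto intro: tree_iso.intros)

lemma tree_iso_sym: "tree_iso s t \<Longrightarrow> tree_iso t s"
  by (induction rule: tree_iso.induct) (auto intro: tree_iso.intros)

lemma tree_iso_trans: "tree_iso s t \<Longrightarrow> tree_iso t u \<Longrightarrow> tree_iso s u"
proof (induction arbitrary: u rule: tree_iso.induct)
  case iso_leaf thus ?case by simp
next
  case (iso_straight l l' r r')
  from iso_straight.prems show ?case
    by (cases rule: tree_iso.cases) (auto intro: tree_iso.intros iso_straight.IH)
next
  case (iso_swap l r' r l')
  from iso_swap.prems show ?case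
    by (cases rule: tree_iso.cases) (auto intro: tree_iso.intros iso_swap.IH)
qed

lemma tree_iso_imp_canon_eq: "tree_iso s t \<Longrightarrow> canon s = canon t"
proof (induction rule: tree_iso.induct)
  case (iso_swap l r' r l')
  show ?case
  proof (cases "btree_code (canon l) = btree_code (canon r)")
    case True
    hence "canon l = canon r" by (rule btree_code_inj)
    thus ?thesis using iso_swap.IH by simp
  next
    case False
    thus ?thesis using iso_swap.IH by auto
  qed
qed simp_all

lemma canon_canon: "canon (canon t) = canon t"
  using tree_iso_imp_canon_eq[OF tree_iso_canon[of t]] by simp

lemma tree_iso_iff_canon_eq: "tree_iso s t \<longleftrightarrow> canon s = canon t"
proof
  assume "canon s = canon t"
  hence "tree_iso (canon s) t" using tree_iso_sym[OF tree_iso_canon[of t]] by simp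
  thus "tree_iso s t" using tree_iso_trans[OF tree_iso_canon[of s]] by blast
qed (rule tree_iso_imp_canon_eq)

lemma canon_Node_eq_iff:
  "canon (Node l r) = Node l r \<longleftrightarrow> canon l = l \<and> canon r = r \<and> btree_code l \<le> btree_code r"
proof
  assume h: "canon (Node l r) = Node l r"
  show "canon l = l \<and> canon r = r \<and> btree_code l \<le> btree_code r"
  proof (cases "btree_code (canon l) \<le> btree_code (canon r)")
    case True thus ?thesis using h by simp
  next
    case False
    hence e: "canon r = l" "canon l = r" using h by auto
    hence "l = r" using canon_canon[of r] by simp
    thus ?thesis using False e by simp
  qed
qed simp

lemma finite_trees_with_leaves: "finite {t. leaves t = n}"
proof (induction n rule: less_induct)
  case (less n)
  let ?smaller = "{t. leaves t < n}"
  have "?smaller = (\<Union>k<n. {t. leaves t = k})" by auto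
  hence "finite ?smaller" using less by simp
  moreover have "{t. leaves t = n} \<subseteq> insert Leaf (case_prod Node ` (?smaller \<times> ?smaller))"
  proof
    fix t assume t: "t \<in> {t. leaves t = n}"
    show "t \<in> insert Leaf (case_prod Node ` (?smaller \<times> ?smaller))"
    proof (cases t)
      case (Node l r)
      moreover have "leaves l \<ge> 1" "leaves r \<ge> 1" by (rule leaves_ge_1)+
      ultimately show ?thesis using t by force
    qed simp
  qed
  ultimately show ?case by (simp add: finite_subset)
qed

definition canonical_trees :: "nat \<Rightarrow> btree set" where
  "canonical_trees n = {t. canon t = t \<and> leaves t = n}"

lemma finite_canonical_trees: "finite (canonical_trees n)"
  by (rule finite_subset[OF _ finite_trees_with_leaves[of n]]) (auto simp: canonical_trees_def)

lemma b_eq_card_canonical_trees: "b n = card (canonical_trees n)"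
proof -
  let ?A = "{t. leaves t = n}" and ?R = "{(s, t). tree_iso s t}"
  let ?fibre = "\<lambda>c. {t. canon t = c}"
  have img: "canon ` ?A = canonical_trees n"
  proof (intro equalityI subsetI)
    fix t assume "t \<in> canonical_trees n"
    hence "t = canon t" "t \<in> ?A" by (auto simp: canonical_trees_def)
    thus "t \<in> canon ` ?A" by (rule image_eqI)
  qed (auto simp: canonical_trees_def canon_canon leaves_canon)
  have "?R `` {x} = ?fibre (canon x)" for x by (auto simp: tree_iso_iff_canon_eq)
  hence "?A // ?R = ?fibre ` canon ` ?A"
    unfolding quotient_def by blast
  moreover have "inj_on ?fibre (canon ` ?A)"
    by (rule inj_onI) (auto simp: canon_canon)
  ultimately have "card (?A // ?R) = card (canon ` ?A)" by (simp add: card_image)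
  thus ?thesis unfolding b_def img .
qed

lemma b_0: "b 0 = 0"
proof -
  have "leaves t \<noteq> 0" for t using leaves_ge_1[of t] by simp
  hence "canonical_trees 0 = {}" by (auto simp: canonical_trees_def)
  thus ?thesis by (simp add: b_eq_card_canonical_trees)
qed

lemma b_1: "b 1 = 1"
proof -
  have "canonical_trees 1 = {Leaf}"
  proof (intro equalityI subsetI)
    fix t assume t: "t \<in> canonical_trees 1"
    show "t \<in> {Leaf}"
    proof (cases t)
      case (Node l r)
      have "leaves l \<ge> 1" "leaves r \<ge> 1" by (rule leaves_ge_1)+
      thus ?thesis using t Node by (simp add: canonical_trees_def)
    qed simp
  qed (simp add: canonical_trees_def)
  thus ?thesis by (simp add: b_eq_card_canonical_trees)
qed

definition canonical_pairs :: "nat \<Rightarrow> (btree \<times> btree) set" where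
  "canonical_pairs n = {(l, r). canon l = l \<and> canon r = r \<and> leaves l + leaves r = n}"

lemma canonical_pairs_eq_UN:
  "canonical_pairs n = (\<Union>k\<in>{0..n}. canonical_trees k \<times> canonical_trees (n - k))"
  by (auto simp: canonical_pairs_def canonical_trees_def)

lemma finite_canonical_pairs: "finite (canonical_pairs n)"
  unfolding canonical_pairs_eq_UN by (simp add: finite_canonical_trees)

lemma card_canonical_pairs: "card (canonical_pairs n) = (\<Sum>k=0..n. b k * b (n - k))"
proof -
  have "card (canonical_pairs n) = (\<Sum>k\<in>{0..n}. card (canonical_trees k \<times> canonical_trees (n - k)))"
    unfolding canonical_pairs_eq_UN using finite_canonical_trees
    by (intro card_UN_disjoint) (auto simp: canonical_trees_def)
  thus ?thesis by (simp add: card_cartesian_product b_eq_card_canonical_trees)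
qed

lemma canonical_trees_eq_ordered_pairs:
  assumes "n \<ge> 2"
  shows "canonical_trees n
    = case_prod Node ` {p \<in> canonical_pairs n. btree_code (fst p) \<le> btree_code (snd p)}"
proof (intro equalityI subsetI)
  fix t assume t: "t \<in> canonical_trees n"
  show "t \<in> case_prod Node ` {p \<in> canonical_pairs n. btree_code (fst p) \<le> btree_code (snd p)}"
  proof (cases t)
    case Leaf thus ?thesis using t assms by (simp add: canonical_trees_def)
  next
    case (Node l r)
    hence "canon (Node l r) = Node l r" "leaves (Node l r) = n"
      using t by (auto simp: canonical_trees_def)
    hence "(l, r) \<in> {p \<in> canonical_pairs n. btree_code (fst p) \<le> btree_code (snd p)}"
      unfolding canon_Node_eq_iff by (simp add: canonical_pairs_def)
    thus ?thesis using Node by force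
  qed
qed (auto simp: canonical_pairs_def canonical_trees_def canon_Node_eq_iff)

text \<open>Ordered pairs of canonical trees split into the two strict code orders, which the swap
  exchanges, and the diagonal.\<close>

lemma b_recurrence:
  assumes "n \<ge> 2"
  shows "2 * b n = (\<Sum>k=0..n. b k * b (n - k)) + (if even n then b (n div 2) else 0)"
proof -
  define Le where "Le = {p \<in> canonical_pairs n. btree_code (fst p) \<le> btree_code (snd p)}"
  define Lt where "Lt = {p \<in> canonical_pairs n. btree_code (fst p) < btree_code (snd p)}"
  define Gt where "Gt = {p \<in> canonical_pairs n. btree_code (fst p) > btree_code (snd p)}"
  define Diag where "Diag = {p \<in> canonical_pairs n. fst p = snd p}"
  have fin: "finite Le" "finite Lt" "finite Gt" "finite Diag"
    unfolding Le_def Lt_def Gt_def Diag_def using finite_canonical_pairs by auto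
  have "canonical_pairs n = Le \<union> Gt" "Le \<inter> Gt = {}" unfolding Le_def Gt_def by auto
  hence card_pairs: "card (canonical_pairs n) = card Le + card Gt"
    using fin by (simp add: card_Un_disjoint)
  have "Le = Lt \<union> Diag" "Lt \<inter> Diag = {}"
    unfolding Le_def Lt_def Diag_def using btree_code_inj by (auto simp: le_less)
  hence card_Le: "card Le = card Lt + card Diag" using fin by (simp add: card_Un_disjoint)
  have "bij_betw prod.swap Gt Lt"
    by (rule bij_betw_byWitness[where f'=prod.swap]) (auto simp: Gt_def Lt_def canonical_pairs_def)
  hence card_Gt: "card Gt = card Lt" by (simp add: bij_betw_same_card)
  have "Diag = (\<lambda>t. (t, t)) ` (if even n then canonical_trees (n div 2) else {})"
    by (auto simp: Diag_def canonical_pairs_def canonical_trees_def)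
  hence card_Diag: "card Diag = (if even n then b (n div 2) else 0)"
    by (simp add: card_image inj_on_def b_eq_card_canonical_trees)
  have "inj_on (case_prod Node) Le" by (auto simp: inj_on_def)
  hence "b n = card Le"
    unfolding b_eq_card_canonical_trees canonical_trees_eq_ordered_pairs[OF assms] Le_def
    by (simp add: card_image)
  thus ?thesis using card_pairs card_Le card_Gt card_Diag card_canonical_pairs by simp
qed

section \<open>Real powers of power series\<close>

text \<open>\<open>fps_powr a f\<close> is \<open>f\<^sup>a\<close> for a series with constant term 1.\<close>

definition fps_powr :: "real \<Rightarrow> real fps \<Rightarrow> real fps" where
  "fps_powr a f = fps_binomial a oo (f - 1)"

lemma fps_powr_nth_0 [simp]: "fps_nth (fps_powr a f) 0 = 1"
  by (simp add: fps_powr_def)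

lemma fps_powr_0 [simp]: "fps_powr 0 f = 1"
  by (simp add: fps_powr_def)

lemma fps_powr_add:
  assumes "fps_nth f 0 = 1"
  shows "fps_powr (a + c) f = fps_powr a f * fps_powr c f"
  unfolding fps_powr_def fps_binomial_add_mult
  by (rule fps_compose_mult_distrib) (simp add: assms)

lemma fps_powr_of_nat:
  assumes "fps_nth f 0 = 1"
  shows "fps_powr (of_nat k) f = f ^ k"
proof -
  have f1: "fps_nth (f - 1) 0 = 0" using assms by simp
  have "fps_powr (of_nat k) f = ((1 + fps_X) oo (f - 1)) ^ k"
    unfolding fps_powr_def fps_binomial_of_nat fps_compose_power[OF f1] ..
  also have "(1 + fps_X) oo (f - 1) = f"
    by (simp add: fps_compose_add_distrib f1 assms)
  finally show ?thesis .
qed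

lemma fps_powr_diff_of_nat:
  assumes "fps_nth f 0 = 1"
  shows "fps_powr a f = fps_powr (a - of_nat k) f * f ^ k"
  using fps_powr_add[OF assms, of "a - of_nat k" "of_nat k"] fps_powr_of_nat[OF assms, of k]
  by simp

lemma fps_powr_deriv:
  assumes "fps_nth f 0 = 1"
  shows "f * fps_deriv (fps_powr a f) = fps_const a * fps_deriv f * fps_powr a f"
proof -
  have f1: "fps_nth (f - 1) 0 = 0" using assms by simp
  have "is_unit (1 + fps_X :: real fps)" by (simp add: fps_is_unit_iff)
  hence "(1 + fps_X) * fps_deriv (fps_binomial a) = fps_const a * fps_binomial a"
    unfolding fps_binomial_deriv by (simp add: dvd_mult_div_cancel unit_imp_dvd)
  hence "((1 + fps_X) * fps_deriv (fps_binomial a)) oo (f - 1)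
           = (fps_const a * fps_binomial a) oo (f - 1)"
    by simp
  hence "f * (fps_deriv (fps_binomial a) oo (f - 1)) = fps_const a * fps_powr a f"
    by (simp add: fps_compose_mult_distrib[OF f1] fps_compose_add_distrib f1 fps_powr_def assms)
  moreover have "fps_deriv (fps_powr a f) = (fps_deriv (fps_binomial a) oo (f - 1)) * fps_deriv f"
    unfolding fps_powr_def by (simp add: fps_compose_deriv[OF f1])
  ultimately show ?thesis by (metis mult.assoc mult.commute)
qed

text \<open>The power is the unique solution with constant term 1 of \<open>f g' = a f' g\<close>: the quotient
  \<open>g f\<^sup>-\<^sup>a\<close> has derivative zero.\<close>

lemma fps_powr_unique:
  assumes f0: "fps_nth f 0 = 1" and g0: "fps_nth g 0 = 1"
    and ode: "f * fps_deriv g = fps_const a * fps_deriv f * g"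
  shows "g = fps_powr a f"
proof -
  let ?q = "g * fps_powr (-a) f"
  have "f * fps_deriv ?q
      = (f * fps_deriv g) * fps_powr (-a) f + g * (f * fps_deriv (fps_powr (-a) f))"
    by (simp add: algebra_simps)
  also have "\<dots> = 0"
    unfolding ode fps_powr_deriv[OF f0]
    by (simp add: algebra_simps fps_const_neg[symmetric] del: fps_const_neg)
  finally have "fps_deriv ?q = 0" using f0 by auto
  hence q: "?q = 1" using g0 fps_deriv_eq_0_iff[of ?q] by simp
  have "g = g * (fps_powr (-a) f * fps_powr a f)" using fps_powr_add[OF f0, of "-a" a] by simp
  also have "\<dots> = fps_powr a f" using q by (simp add: mult.assoc[symmetric])
  finally show ?thesis .
qed

lemma fps_powr_mult:
  assumes f0: "fps_nth f 0 = 1" and g0: "fps_nth g 0 = 1"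
  shows "fps_powr a (f * g) = fps_powr a f * fps_powr a g"
proof -
  have "f * g * fps_deriv (fps_powr a f * fps_powr a g)
      = g * fps_powr a g * (f * fps_deriv (fps_powr a f))
        + f * fps_powr a f * (g * fps_deriv (fps_powr a g))"
    by (simp add: algebra_simps)
  also have "\<dots> = fps_const a * fps_deriv (f * g) * (fps_powr a f * fps_powr a g)"
    unfolding fps_powr_deriv[OF f0] fps_powr_deriv[OF g0] by (simp add: algebra_simps)
  finally show ?thesis
    by (intro fps_powr_unique[symmetric]) (simp_all add: f0 g0)
qed

lemma fps_powr_compose:
  assumes h0: "fps_nth h 0 = 0" and f0: "fps_nth f 0 = 1"
  shows "fps_powr a f oo h = fps_powr a (f oo h)"
proof -
  have f1: "fps_nth (f - 1) 0 = 0" using f0 by simp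
  have "fps_powr a f oo h = fps_binomial a oo ((f - 1) oo h)"
    unfolding fps_powr_def by (rule fps_compose_assoc[OF h0 f1, symmetric])
  also have "(f - 1) oo h = (f oo h) - 1" by (simp add: fps_compose_sub_distrib)
  finally show ?thesis by (simp add: fps_powr_def)
qed

lemma fps_nth_compose_X_squared:
  "fps_nth (f oo fps_X ^ 2) n = (if even n then fps_nth f (n div 2) else (0::real))"
proof -
  have "fps_nth (f oo fps_X ^ 2) n = (\<Sum>i = 0..n. fps_nth f i * (if n = 2 * i then 1 else 0))"
    by (simp add: fps_compose_nth power_mult[symmetric] mult.commute)
  also have "\<dots> = (\<Sum>i \<in> {0..n}. if i = n div 2 \<and> even n then fps_nth f i else 0)"
    by (intro sum.cong refl) auto
  also have "\<dots> = (if even n then fps_nth f (n div 2) else 0)"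
    by (cases "even n") (simp_all add: sum.delta)
  finally show ?thesis .
qed

lemma fps_nth_mult_compose:
  assumes d0: "fps_nth d 0 = (0::real)"
  shows "fps_nth (g * (f oo d)) n = (\<Sum>i = 0..n. fps_nth f i * fps_nth (g * d ^ i) n)"
proof -
  have high_powers: "fps_nth (d ^ i) j = 0" if "j < i" for i j
    using startsby_zero_power_prefix[OF d0] that by blast
  have "fps_nth (g * (f oo d)) n
      = (\<Sum>k = 0..n. fps_nth g k * (\<Sum>i = 0..n - k. fps_nth f i * fps_nth (d ^ i) (n - k)))"
    by (simp add: fps_mult_nth fps_compose_nth)
  also have "\<dots> = (\<Sum>k = 0..n. fps_nth g k * (\<Sum>i = 0..n. fps_nth f i * fps_nth (d ^ i) (n - k)))"
  proof (intro sum.cong refl)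
    fix k assume "k \<in> {0..n}"
    have "(\<Sum>i = 0..n - k. fps_nth f i * fps_nth (d ^ i) (n - k))
        = (\<Sum>i = 0..n. fps_nth f i * fps_nth (d ^ i) (n - k))"
      by (rule sum.mono_neutral_left) (auto simp: high_powers)
    thus "fps_nth g k * (\<Sum>i = 0..n - k. fps_nth f i * fps_nth (d ^ i) (n - k))
        = fps_nth g k * (\<Sum>i = 0..n. fps_nth f i * fps_nth (d ^ i) (n - k))"
      by simp
  qed
  also have "\<dots> = (\<Sum>k = 0..n. \<Sum>i = 0..n. fps_nth f i * (fps_nth g k * fps_nth (d ^ i) (n - k)))"
    by (simp add: sum_distrib_left mult.left_commute)
  also have "\<dots> = (\<Sum>i = 0..n. \<Sum>k = 0..n. fps_nth f i * (fps_nth g k * fps_nth (d ^ i) (n - k)))"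
    by (rule sum.swap)
  also have "\<dots> = (\<Sum>i = 0..n. fps_nth f i * fps_nth (g * d ^ i) n)"
    by (simp add: fps_mult_nth sum_distrib_left)
  finally show ?thesis .
qed

lemma gbinomial_neg_half_times_power:
  "((-(t/2 + 1)) gchoose i) * (-2) ^ i = (\<Prod>j\<in>{1..i}. 2 * real j + t) / fact i"
proof -
  have "(-2) ^ i * (\<Prod>j = 0..<i. -(t/2+1) - of_nat j) = (\<Prod>j\<in>{1..i}. 2 * real j + t)"
  proof (induction i)
    case (Suc i)
    have "(-2::real) ^ Suc i * (\<Prod>j = 0..<Suc i. -(t/2+1) - of_nat j)
        = ((-2) ^ i * (\<Prod>j = 0..<i. -(t/2+1) - of_nat j)) * ((-2) * (-(t/2+1) - of_nat i))"
      by (simp add: algebra_simps)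
    also have "\<dots> = (\<Prod>j\<in>{1..Suc i}. 2 * real j + t)"
      unfolding Suc by (simp add: algebra_simps prod.cl_ivl_Suc)
    finally show ?case .
  qed simp
  also have "(\<Prod>j = 0..<i. -(t/2+1) - of_nat j) = fact i * ((-(t/2 + 1)) gchoose i)"
    by (rule gbinomial_mult_fact[symmetric])
  finally show ?thesis by (simp add: eq_divide_eq mult_ac)
qed

section \<open>The generating function of a solution of the tree recurrence\<close>

definition ones_weight :: "real \<Rightarrow> nat \<Rightarrow> real" where
  "ones_weight t m = (\<Prod>j\<in>{1..m}. 2 * real j + t) / fact m"

locale tree_recurrence =
  fixes \<beta> :: "nat \<Rightarrow> real"
  assumes \<beta>_0: "\<beta> 0 = 0" and \<beta>_1: "\<beta> 1 = 1"
    and \<beta>_rec: "\<And>n. n \<ge> 2 \<Longrightarrow>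
      2 * \<beta> n = (\<Sum>k=0..n. \<beta> k * \<beta> (n - k)) + (if even n then \<beta> (n div 2) else 0)"
begin

definition S :: "real fps" where "S = 1 - Abs_fps \<beta>"

definition W :: "real fps" where "W = S - 2 * fps_X * fps_deriv S"

definition Wt :: "real \<Rightarrow> real fps" where "Wt t = W * fps_powr (-(t + 1)) S"

lemma S_nth_0: "fps_nth S 0 = 1"
  by (simp add: S_def \<beta>_0)

lemma S_functional_equation: "S * S + 2 * fps_X = S oo fps_X ^ 2"
proof -
  let ?T = "Abs_fps \<beta>"
  have "?T * ?T + (?T oo fps_X ^ 2) = 2 * ?T - 2 * fps_X"
  proof (rule fps_ext)
    fix n
    have "fps_nth (?T * ?T + (?T oo fps_X ^ 2)) n
        = (\<Sum>k=0..n. \<beta> k * \<beta> (n - k)) + (if even n then \<beta> (n div 2) else 0)"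
      by (simp add: fps_mult_nth fps_nth_compose_X_squared)
    also have "\<dots> = 2 * \<beta> n - (if n = 1 then 2 else 0)"
    proof (cases "n \<ge> 2")
      case False
      hence "n = 0 \<or> n = 1" by auto
      thus ?thesis using \<beta>_0 \<beta>_1 by auto
    qed (simp add: \<beta>_rec)
    also have "\<dots> = fps_nth (2 * ?T - 2 * fps_X) n"
      by (simp add: numeral_fps_const)
    finally show "fps_nth (?T * ?T + (?T oo fps_X ^ 2)) n = fps_nth (2 * ?T - 2 * fps_X) n" .
  qed
  thus ?thesis by (simp add: S_def fps_compose_sub_distrib algebra_simps)
qed

lemma W_mult_S: "W * S = W oo fps_X ^ 2"
proof -
  let ?X2 = "fps_X ^ 2 :: real fps"
  have x0: "fps_nth ?X2 0 = 0" by simp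
  have "fps_deriv (S * S + 2 * fps_X) = fps_deriv (S oo ?X2)"
    by (simp only: S_functional_equation)
  hence d: "2 * S * fps_deriv S + 2 = (fps_deriv S oo ?X2) * (2 * fps_X)"
    by (simp add: fps_compose_deriv[OF x0] fps_deriv_power algebra_simps numeral_fps_const)
  have "W * S = S * S - fps_X * (2 * S * fps_deriv S + 2) + 2 * fps_X"
    unfolding W_def by (simp add: algebra_simps)
  also have "\<dots> = (S * S + 2 * fps_X) - 2 * ?X2 * (fps_deriv S oo ?X2)"
    unfolding d by (simp add: algebra_simps power2_eq_square)
  also have "\<dots> = W oo ?X2"
    unfolding S_functional_equation W_def
    by (simp add: fps_compose_sub_distrib fps_compose_mult_distrib[OF x0] numeral_fps_const)
  finally show ?thesis .
qed

abbreviation (input) R :: "real fps" where "R \<equiv> S oo fps_X ^ 2"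

abbreviation (input) D :: "real fps" where "D \<equiv> fps_const (-2) * fps_X * inverse R"

lemma R_nth_0: "fps_nth R 0 = 1"
  by (simp add: S_nth_0)

lemma S_square_eq: "S * S = R * (1 + D)"
proof -
  have "R * inverse R = 1" using R_nth_0 by (simp add: inverse_mult_eq_1')
  hence "R * (1 + D) = R - 2 * fps_X"
    by (simp add: algebra_simps numeral_fps_const fps_const_neg[symmetric] del: fps_const_neg)
  thus ?thesis by (simp add: S_functional_equation[symmetric])
qed

lemma Wt_eq_binomial_compose:
  "Wt t = (W oo fps_X ^ 2) * fps_powr (-(t/2 + 1)) R * (fps_binomial (-(t/2 + 1)) oo D)"
proof -
  let ?a = "-(t/2 + 1)"
  have "-(t + 1) - of_nat 1 = ?a + ?a" by simp
  note split_exponent = fps_powr_diff_of_nat[OF S_nth_0, of "-(t + 1)" 1,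
      unfolded this power_one_right fps_powr_add[OF S_nth_0]]
  have "Wt t = (W * S) * fps_powr ?a (S * S)"
    by (simp only: Wt_def split_exponent fps_powr_mult[OF S_nth_0 S_nth_0] mult_ac)
  also have "fps_powr ?a (S * S) = fps_powr ?a R * (fps_binomial ?a oo D)"
    unfolding S_square_eq fps_powr_mult[OF R_nth_0, of "1 + D", simplified]
    by (simp add: fps_powr_def)
  finally show ?thesis unfolding W_mult_S by (simp add: mult.assoc)
qed

text \<open>Dividing \<open>R\<^sup>a\<close> by \<open>R\<^sup>i\<close> lowers the exponent to \<open>-(t/2 + i + 1)\<close>, which is where the
  shifted parameter \<open>t/2 + i\<close> comes from.\<close>

lemma binomial_term_eq:
  "(W oo fps_X ^ 2) * fps_powr (-(t/2 + 1)) R * D ^ i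
     = fps_const ((-2) ^ i) * (fps_X ^ i * (Wt (t/2 + real i) oo fps_X ^ 2))"
proof -
  let ?a = "-(t/2 + 1)"
  have x0: "fps_nth (fps_X ^ 2 :: real fps) 0 = 0" by simp
  have "fps_powr ?a R * inverse R ^ i = fps_powr (?a - of_nat i) R * (R * inverse R) ^ i"
    using fps_powr_diff_of_nat[OF R_nth_0, of ?a i] by (simp add: power_mult_distrib algebra_simps)
  also have "R * inverse R = 1" using R_nth_0 by (simp add: inverse_mult_eq_1')
  also have "fps_powr (?a - of_nat i) R = fps_powr (?a - of_nat i) S oo fps_X ^ 2"
    by (rule fps_powr_compose[OF x0 S_nth_0, symmetric])
  also have "?a - of_nat i = -((t/2 + real i) + 1)" by simp
  finally have "(W oo fps_X ^ 2) * fps_powr ?a R * inverse R ^ i = Wt (t/2 + real i) oo fps_X ^ 2"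
    by (simp add: Wt_def mult.assoc fps_compose_mult_distrib[OF x0])
  thus ?thesis
    by (simp add: power_mult_distrib fps_const_power algebra_simps)
qed

lemma Wt_nth_recurrence:
  "fps_nth (Wt t) n = (\<Sum>m=0..n.
     if even (n - m) then ones_weight t m * fps_nth (Wt (t/2 + real m)) ((n - m) div 2) else 0)"
proof -
  have D0: "fps_nth D 0 = 0" by simp
  have "fps_nth (Wt t) n = (\<Sum>m = 0..n. fps_nth (fps_binomial (-(t/2 + 1))) m
          * fps_nth ((W oo fps_X ^ 2) * fps_powr (-(t/2 + 1)) R * D ^ m) n)"
    unfolding Wt_eq_binomial_compose by (rule fps_nth_mult_compose[OF D0])
  also have "\<dots> = (\<Sum>m=0..n.
     if even (n - m) then ones_weight t m * fps_nth (Wt (t/2 + real m)) ((n - m) div 2) else 0)"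
  proof (rule sum.cong[OF refl])
    fix m assume "m \<in> {0..n}"
    moreover have "((-(t/2 + 1)) gchoose m) * (-2) ^ m = ones_weight t m"
      unfolding ones_weight_def by (rule gbinomial_neg_half_times_power)
    ultimately show "fps_nth (fps_binomial (-(t/2 + 1))) m
          * fps_nth ((W oo fps_X ^ 2) * fps_powr (-(t/2 + 1)) R * D ^ m) n
        = (if even (n - m) then ones_weight t m * fps_nth (Wt (t/2 + real m)) ((n - m) div 2) else 0)"
      unfolding binomial_term_eq
      by (auto simp: fps_X_power_mult_nth fps_nth_compose_X_squared simp del: minus_add_distrib)
  qed
  finally show ?thesis .
qed

lemma Wt_nth_0: "fps_nth (Wt t) 0 = 1"
  by (simp add: Wt_def W_def S_nth_0)

lemma Wt_minus_1_nth: "n \<ge> 1 \<Longrightarrow> fps_nth (Wt (-1)) n = (2 * real n - 1) * \<beta> n"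
  by (simp add: Wt_def W_def S_def fps_deriv_def algebra_simps numeral_fps_const)

lemma recurrence_solution_eq_Wt_nth:
  assumes V_0: "\<And>t. V t 0 = 1"
    and V_rec: "\<And>t n. n \<ge> 1 \<Longrightarrow> V t n = (\<Sum>m=0..n.
       if even (n - m) then ones_weight t m * V (t/2 + real m) ((n - m) div 2) else 0)"
  shows "V t n = fps_nth (Wt t) n"
proof (induction n arbitrary: t rule: less_induct)
  case (less n)
  show ?case
  proof (cases "n = 0")
    case True thus ?thesis by (simp add: V_0 Wt_nth_0)
  next
    case False
    hence "(n - m) div 2 < n" for m by simp
    hence "(\<Sum>m=0..n. if even (n - m) then ones_weight t m * V (t/2 + real m) ((n - m) div 2) else 0)
        = (\<Sum>m=0..n. if even (n - m)
             then ones_weight t m * fps_nth (Wt (t/2 + real m)) ((n - m) div 2) else 0)"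
      using less.IH by (intro sum.cong) simp_all
    thus ?thesis using False by (simp only: V_rec Wt_nth_recurrence[of t n])
  qed
qed

end

section \<open>Binary partitions\<close>

fun suffix_prod :: "real \<Rightarrow> nat list \<Rightarrow> real" where
  "suffix_prod t [] = 1"
| "suffix_prod t (x # xs) = (2 * real (x + sum_list xs) + t) * suffix_prod t xs"

lemma suffix_prod_append:
  "suffix_prod t (xs @ ys) = suffix_prod (t + 2 * real (sum_list ys)) xs * suffix_prod t ys"
  by (induction xs) (simp_all add: algebra_simps)

lemma sum_list_map_double: "sum_list (map ((*) (2::nat)) xs) = 2 * sum_list xs"
  by (induction xs) auto

lemma suffix_prod_map_double:
  "suffix_prod t (map ((*) 2) xs) = 2 ^ length xs * suffix_prod (t/2) xs"
proof (induction xs)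
  case (Cons x xs)
  have "suffix_prod t (map ((*) 2) (x # xs))
      = (2 * real (2 * x + 2 * sum_list xs) + t) * suffix_prod t (map ((*) 2) xs)"
    by (simp add: sum_list_map_double)
  also have "\<dots> = 2 ^ length (x # xs) * suffix_prod (t/2) (x # xs)"
    unfolding Cons by (simp add: field_simps)
  finally show ?case .
qed simp

lemma suffix_prod_replicate_1: "suffix_prod t (replicate m 1) = (\<Prod>j\<in>{1..m}. 2 * real j + t)"
  by (induction m) (simp_all add: prod.cl_ivl_Suc sum_list_replicate algebra_simps)

lemma sum_nth_pred_eq_sum_list: "(\<Sum>j\<in>{1..length xs}. xs ! (j - 1)) = sum_list xs"
  using sum.atLeast1_atMost_eq[of "\<lambda>j. xs ! (j - 1)" "length xs"]
  by (simp add: sum_list_sum_nth atLeast0LessThan)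

lemma suffix_prod_eq_prod_suffix_sums:
  "suffix_prod t xs = (\<Prod>i\<in>{1..length xs}. 2 * real (\<Sum>j\<in>{i..length xs}. xs ! (j - 1)) + t)"
proof (induction xs)
  case (Cons x xs)
  have suffix_sum_Cons: "(\<Sum>j\<in>{Suc i..length (x # xs)}. (x # xs) ! (j - 1))
      = (\<Sum>j\<in>{i..length xs}. xs ! (j - 1))" if "i \<ge> 1" for i
  proof -
    have "(\<Sum>j\<in>{Suc i..Suc (length xs)}. (x # xs) ! (j - 1))
        = (\<Sum>j\<in>{i..length xs}. (x # xs) ! (Suc j - 1))"
      by (rule sum.shift_bounds_cl_Suc_ivl)
    also have "\<dots> = (\<Sum>j\<in>{i..length xs}. xs ! (j - 1))"
      using that by (intro sum.cong refl) (auto simp: nth_Cons')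
    finally show ?thesis by simp
  qed
  let ?F = "\<lambda>ys i. 2 * real (\<Sum>j\<in>{i..length ys}. ys ! (j - 1)) + t"
  have "(\<Prod>i\<in>{1..length (x # xs)}. ?F (x # xs) i)
      = ?F (x # xs) 1 * (\<Prod>i\<in>{Suc 1..Suc (length xs)}. ?F (x # xs) i)"
    by (simp only: length_Cons prod.atLeast_Suc_atMost[of 1 "Suc (length xs)"])
  also have "(\<Prod>i\<in>{Suc 1..Suc (length xs)}. ?F (x # xs) i)
      = (\<Prod>i\<in>{1..length xs}. ?F (x # xs) (Suc i))"
    by (rule prod.shift_bounds_cl_Suc_ivl)
  also have "\<dots> = (\<Prod>i\<in>{1..length xs}. ?F xs i)"
  proof (intro prod.cong refl)
    fix i assume "i \<in> {1..length xs}"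
    thus "?F (x # xs) (Suc i) = ?F xs i" using suffix_sum_Cons[of i] by simp
  qed
  also have "\<dots> = suffix_prod t xs" by (rule Cons.IH[symmetric])
  also have "?F (x # xs) 1 = 2 * real (x + sum_list xs) + t"
    using sum_nth_pred_eq_sum_list[of "x # xs"] by simp
  finally show ?case by simp
qed simp

lemma z_pos: "z lam > 0"
  by (simp add: z_def)

lemma z_eq_prod_upto:
  assumes "N \<ge> sum_list lam"
  shows "z lam = (\<Prod>i\<in>{0..N}. (2 ^ i) ^ Defs.mult lam i * fact (Defs.mult lam i))"
  unfolding z_def
proof (rule prod.mono_neutral_left)
  show "\<forall>i\<in>{0..N} - {0..sum_list lam}. (2 ^ i) ^ Defs.mult lam i * fact (Defs.mult lam i) = (1::nat)"
  proof
    fix i assume i: "i \<in> {0..N} - {0..sum_list lam}"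
    have "2 ^ i \<notin> set lam"
    proof
      assume "2 ^ i \<in> set lam"
      hence "2 ^ i \<le> sum_list lam" by (simp add: member_le_sum_list)
      moreover have "i < 2 ^ i" by (rule less_exp)
      moreover have "\<not> i \<le> sum_list lam" using i by simp
      ultimately show False by linarith
    qed
    thus "(2 ^ i) ^ Defs.mult lam i * fact (Defs.mult lam i) = (1::nat)"
      by (simp add: Defs.mult_def count_list_0_iff)
  qed
qed (use assms in auto)

lemma sum_count_list_powers_of_2:
  fixes xs :: "nat list"
  assumes "finite A" "\<forall>x\<in>set xs. \<exists>k\<in>A. x = 2 ^ k"
  shows "(\<Sum>i\<in>A. count_list xs (2 ^ i)) = length xs"
  using assms(2)
proof (induction xs)
  case (Cons x xs)
  then obtain k where k: "k \<in> A" "x = 2 ^ k" by auto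
  have "(\<Sum>i\<in>A. count_list (x # xs) (2 ^ i))
      = (\<Sum>i\<in>A. (if i = k then 1 else 0) + count_list xs (2 ^ i))"
    by (intro sum.cong refl) (auto simp: k)
  thus ?case using Cons k assms(1) by (simp add: sum.distrib)
qed simp

definition double_with_ones :: "nat \<Rightarrow> nat list \<Rightarrow> nat list" where
  "double_with_ones m \<mu> = map ((*) 2) \<mu> @ replicate m 1"

lemma count_list_double_with_ones_1: "count_list (double_with_ones m \<mu>) 1 = m"
proof -
  have "count_list (map ((*) (2::nat)) \<mu>) 1 = 0" by (induction \<mu>) auto
  moreover have "count_list (replicate m (1::nat)) 1 = m" by (induction m) auto
  ultimately show ?thesis by (simp add: double_with_ones_def)
qed

lemma mult_double_with_ones_Suc: "Defs.mult (double_with_ones m \<mu>) (Suc i) = Defs.mult \<mu> i"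
proof -
  have "count_list (map ((*) (2::nat)) \<mu>) (2 * y) = count_list \<mu> y" for y
    by (induction \<mu>) auto
  thus ?thesis by (simp add: Defs.mult_def double_with_ones_def count_list_0_iff)
qed

lemma z_double_with_ones:
  assumes "\<forall>x\<in>set \<mu>. \<exists>k. x = 2 ^ k"
  shows "z (double_with_ones m \<mu>) = fact m * 2 ^ length \<mu> * z \<mu>"
proof -
  let ?g = "double_with_ones m \<mu>"
  define M where "M = sum_list ?g"
  have M: "sum_list \<mu> \<le> M"
    by (simp add: M_def double_with_ones_def sum_list_map_double)
  have "\<forall>x\<in>set \<mu>. \<exists>k\<in>{0..M}. x = 2 ^ k"
  proof
    fix x assume x: "x \<in> set \<mu>"
    then obtain k where k: "x = 2 ^ k" using assms by auto
    have "k < 2 ^ k" by (rule less_exp)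
    moreover have "x \<le> sum_list \<mu>" using x by (simp add: member_le_sum_list)
    ultimately have "k \<le> M" using k M by linarith
    thus "\<exists>k\<in>{0..M}. x = 2 ^ k" using k by auto
  qed
  hence length_\<mu>: "(\<Sum>i\<in>{0..M}. Defs.mult \<mu> i) = length \<mu>"
    unfolding Defs.mult_def by (simp add: sum_count_list_powers_of_2)
  have "z ?g = (\<Prod>i\<in>{0..Suc M}. (2 ^ i) ^ Defs.mult ?g i * fact (Defs.mult ?g i))"
    by (rule z_eq_prod_upto) (simp add: M_def)
  also have "\<dots> = fact m * (\<Prod>i\<in>{0..M}. (2 ^ Suc i) ^ Defs.mult ?g (Suc i) * fact (Defs.mult ?g (Suc i)))"
    by (subst prod.atLeast0_atMost_Suc_shift)
      (simp add: Defs.mult_def count_list_double_with_ones_1[unfolded One_nat_def])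
  also have "\<dots> = fact m *
      (\<Prod>i\<in>{0..M}. 2 ^ Defs.mult \<mu> i * ((2 ^ i) ^ Defs.mult \<mu> i * fact (Defs.mult \<mu> i)))"
    by (simp add: mult_double_with_ones_Suc power_mult_distrib mult.assoc)
  also have "\<dots> = fact m * 2 ^ length \<mu> * z \<mu>"
    by (simp add: prod.distrib power_sum[symmetric] length_\<mu> z_eq_prod_upto[OF M])
  finally show ?thesis .
qed

lemma power_of_2_ge_1: "\<exists>k. x = (2::nat) ^ k \<Longrightarrow> x \<ge> 1"
  by auto

lemma finite_binary_partitions: "finite (binary_partitions n)"
proof (rule finite_subset)
  show "binary_partitions n \<subseteq> {xs. set xs \<subseteq> {0..n} \<and> length xs \<le> n}"
  proof
    fix xs assume "xs \<in> binary_partitions n"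
    hence parts: "\<forall>x\<in>set xs. x \<ge> 1" and sum: "sum_list xs = n"
      using power_of_2_ge_1 by (auto simp: binary_partitions_def)
    have "length xs \<le> sum_list xs"
      using parts by (induction xs) auto
    thus "xs \<in> {xs. set xs \<subseteq> {0..n} \<and> length xs \<le> n}"
      using sum by (auto simp: member_le_sum_list)
  qed
qed (rule finite_lists_length_le, simp)

lemma binary_partitions_0: "binary_partitions 0 = {[]}"
proof -
  have "xs \<in> binary_partitions 0 \<Longrightarrow> xs = []" for xs
    by (cases xs) (auto simp: binary_partitions_def)
  thus ?thesis by (auto simp: binary_partitions_def)
qed

lemma double_with_ones_in_binary_partitions:
  assumes "m \<le> n" "even (n - m)" "\<mu> \<in> binary_partitions ((n - m) div 2)"
  shows "double_with_ones m \<mu> \<in> binary_partitions n"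
proof -
  have \<mu>: "sorted_wrt (\<ge>) \<mu>" "\<forall>p\<in>set \<mu>. \<exists>k. p = 2 ^ k" "sum_list \<mu> = (n - m) div 2"
    using assms(3) by (auto simp: binary_partitions_def)
  have "sorted_wrt (\<ge>) (map ((*) (2::nat)) \<mu>)"
    using \<mu>(1) by (auto simp: sorted_wrt_map elim: sorted_wrt_mono_rel[rotated])
  moreover have "sorted_wrt (\<ge>) (replicate m (1::nat))"
    by (simp add: sorted_wrt_iff_nth_less)
  moreover have "\<forall>x\<in>set (map ((*) 2) \<mu>). \<forall>y\<in>set (replicate m (1::nat)). x \<ge> y"
    using \<mu>(2) power_of_2_ge_1 by fastforce
  ultimately have "sorted_wrt (\<ge>) (double_with_ones m \<mu>)"
    unfolding double_with_ones_def sorted_wrt_append by blast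
  moreover have "\<forall>p\<in>set (double_with_ones m \<mu>). \<exists>k. p = 2 ^ k"
  proof
    fix p assume "p \<in> set (double_with_ones m \<mu>)"
    hence "p = 1 \<or> (\<exists>x\<in>set \<mu>. p = 2 * x)" by (auto simp: double_with_ones_def)
    thus "\<exists>k. p = 2 ^ k"
    proof
      assume "\<exists>x\<in>set \<mu>. p = 2 * x"
      then obtain x k where "p = 2 * x" "x = 2 ^ k" using \<mu>(2) by blast
      hence "p = 2 ^ Suc k" by simp
      thus ?thesis ..
    qed (metis power_0)
  qed
  moreover have "sum_list (double_with_ones m \<mu>) = n"
    using assms(1,2) \<mu>(3) by (simp add: double_with_ones_def sum_list_map_double sum_list_replicate)
  ultimately show ?thesis by (simp add: binary_partitions_def)
qed

lemma double_with_ones_inject: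
  "double_with_ones m \<mu> = double_with_ones m' \<mu>' \<Longrightarrow> m = m' \<and> \<mu> = \<mu>'"
proof -
  assume e: "double_with_ones m \<mu> = double_with_ones m' \<mu>'"
  hence "m = m'" using count_list_double_with_ones_1 by metis
  moreover have "inj ((*) (2::nat))" by (auto simp: inj_def)
  ultimately show ?thesis using e by (simp add: double_with_ones_def inj_map_eq_map)
qed

lemma dropWhile_neq_1_eq_replicate:
  fixes xs :: "nat list"
  assumes "sorted_wrt (\<ge>) xs" "\<forall>x\<in>set xs. x \<ge> 1"
  shows "dropWhile (\<lambda>x. x \<noteq> 1) xs = replicate (length (dropWhile (\<lambda>x. x \<noteq> 1) xs)) 1"
proof -
  let ?B = "dropWhile (\<lambda>x. x \<noteq> 1) xs"
  have "sorted_wrt (\<ge>) (takeWhile (\<lambda>x. x \<noteq> 1) xs @ ?B)" using assms(1) by simp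
  hence sorted: "sorted_wrt (\<ge>) ?B" by (simp add: sorted_wrt_append)
  have pos: "\<forall>x\<in>set ?B. x \<ge> 1" using assms(2) set_dropWhileD by fastforce
  have "\<forall>x\<in>set ?B. x = 1"
  proof (cases ?B)
    case Nil thus ?thesis unfolding Nil by simp
  next
    case (Cons y ys)
    hence "y = 1" unfolding dropWhile_eq_Cons_conv by simp
    thus ?thesis using sorted pos Cons by fastforce
  qed
  from replicate_length_same[OF this] show ?thesis by (rule sym)
qed

text \<open>The parts different from 1 come first, since the parts decrease.\<close>

lemma binary_partition_eq_double_with_ones:
  assumes "lam \<in> binary_partitions n"
  obtains m \<mu> where "m \<le> n" "even (n - m)" "\<mu> \<in> binary_partitions ((n - m) div 2)"
    "lam = double_with_ones m \<mu>"
proof -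
  have lam: "sorted_wrt (\<ge>) lam" "\<forall>p\<in>set lam. \<exists>k. p = 2 ^ k" "sum_list lam = n"
    using assms by (auto simp: binary_partitions_def)
  define A where "A = takeWhile (\<lambda>x. x \<noteq> 1) lam"
  define B where "B = dropWhile (\<lambda>x. x \<noteq> 1) lam"
  have B: "B = replicate (length B) 1"
    unfolding B_def using lam(1,2) power_of_2_ge_1 by (intro dropWhile_neq_1_eq_replicate) auto
  have "\<forall>x\<in>set A. \<exists>k. x = 2 ^ Suc k"
  proof
    fix x assume x: "x \<in> set A"
    hence x_lam: "x \<in> set lam \<and> x \<noteq> 1" unfolding A_def by (rule set_takeWhileD)
    moreover obtain k where "x = 2 ^ k" using lam(2) x_lam by blast
    ultimately show "\<exists>k. x = 2 ^ Suc k" by (cases k) auto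
  qed
  hence A: "A = map ((*) 2) (map (\<lambda>x. x div 2) A)" and
    halves: "\<forall>p\<in>set (map (\<lambda>x. x div 2) A). \<exists>k. p = 2 ^ k"
    by (induction A) auto
  define \<mu> where "\<mu> = map (\<lambda>x. x div 2) A"
  have lam_eq: "lam = double_with_ones (length B) \<mu>"
    using A B takeWhile_dropWhile_id[of "\<lambda>x. x \<noteq> 1" lam]
    by (simp add: double_with_ones_def \<mu>_def A_def B_def)
  hence sum: "2 * sum_list \<mu> + length B = n"
    using lam(3) by (simp add: double_with_ones_def sum_list_map_double sum_list_replicate)
  have "sorted_wrt (\<ge>) (A @ B)" using lam(1) by (simp add: A_def B_def)
  hence "sorted_wrt (\<ge>) A" by (simp add: sorted_wrt_append)
  hence "sorted_wrt (\<ge>) \<mu>" unfolding \<mu>_def sorted_wrt_map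
    by (rule sorted_wrt_mono_rel[rotated]) (simp add: div_le_mono)
  hence "\<mu> \<in> binary_partitions ((n - length B) div 2)"
    using halves sum by (simp add: binary_partitions_def \<mu>_def)
  with sum lam_eq show ?thesis by (intro that) auto
qed

lemma bij_betw_double_with_ones:
  "bij_betw (case_prod double_with_ones)
     (SIGMA m:{m\<in>{0..n}. even (n - m)}. binary_partitions ((n - m) div 2)) (binary_partitions n)"
  unfolding bij_betw_def
proof
  show "inj_on (case_prod double_with_ones)
          (SIGMA m:{m\<in>{0..n}. even (n - m)}. binary_partitions ((n - m) div 2))"
    by (auto simp: inj_on_def dest: double_with_ones_inject)
  show "case_prod double_with_ones `
          (SIGMA m:{m\<in>{0..n}. even (n - m)}. binary_partitions ((n - m) div 2)) = binary_partitions n"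
  proof (intro equalityI subsetI)
    fix lam assume "lam \<in> binary_partitions n"
    then obtain m \<mu> where "m \<le> n" "even (n - m)" "\<mu> \<in> binary_partitions ((n - m) div 2)"
      "lam = double_with_ones m \<mu>"
      by (rule binary_partition_eq_double_with_ones)
    thus "lam \<in> case_prod double_with_ones `
        (SIGMA m:{m\<in>{0..n}. even (n - m)}. binary_partitions ((n - m) div 2))"
      by force
  qed (auto intro: double_with_ones_in_binary_partitions)
qed

definition partition_sum :: "real \<Rightarrow> nat \<Rightarrow> real" where
  "partition_sum t n = (\<Sum>lam\<in>binary_partitions n. suffix_prod t lam / real (z lam))"

lemma partition_sum_0: "partition_sum t 0 = 1"
  by (simp add: partition_sum_def binary_partitions_0 z_def Defs.mult_def)

lemma partition_sum_term_double_with_ones: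
  assumes "\<forall>x\<in>set \<mu>. \<exists>k. x = 2 ^ k"
  shows "suffix_prod t (double_with_ones m \<mu>) / real (z (double_with_ones m \<mu>))
       = ones_weight t m * (suffix_prod (t/2 + real m) \<mu> / real (z \<mu>))"
proof -
  have "suffix_prod t (double_with_ones m \<mu>)
      = 2 ^ length \<mu> * suffix_prod (t/2 + real m) \<mu> * (\<Prod>j\<in>{1..m}. 2 * real j + t)"
    unfolding double_with_ones_def suffix_prod_append suffix_prod_map_double suffix_prod_replicate_1
    by (simp add: sum_list_replicate add_divide_distrib)
  thus ?thesis using z_pos[of \<mu>]
    by (simp add: z_double_with_ones[OF assms] ones_weight_def field_simps)
qed

lemma partition_sum_recurrence:
  "partition_sum t n = (\<Sum>m=0..n.
     if even (n - m) then ones_weight t m * partition_sum (t/2 + real m) ((n - m) div 2) else 0)"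
proof -
  let ?I = "{m\<in>{0..n}. even (n - m)}"
  have "partition_sum t n = (\<Sum>p\<in>(SIGMA m:?I. binary_partitions ((n - m) div 2)).
          suffix_prod t (case_prod double_with_ones p) / real (z (case_prod double_with_ones p)))"
    unfolding partition_sum_def by (rule sum.reindex_bij_betw[OF bij_betw_double_with_ones, symmetric])
  also have "\<dots> = (\<Sum>m\<in>?I. \<Sum>\<mu>\<in>binary_partitions ((n - m) div 2).
          suffix_prod t (double_with_ones m \<mu>) / real (z (double_with_ones m \<mu>)))"
    by (subst sum.Sigma) (auto simp: finite_binary_partitions split_def)
  also have "\<dots> = (\<Sum>m\<in>?I. ones_weight t m * partition_sum (t/2 + real m) ((n - m) div 2))"
    unfolding partition_sum_def sum_distrib_left
    by (intro sum.cong refl partition_sum_term_double_with_ones) (auto simp: binary_partitions_def)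
  also have "\<dots> = (\<Sum>m=0..n.
     if even (n - m) then ones_weight t m * partition_sum (t/2 + real m) ((n - m) div 2) else 0)"
    by (rule sum.inter_filter) simp
  finally show ?thesis .
qed

lemma suffix_prod_minus_1:
  assumes "lam \<in> binary_partitions n" "n \<ge> 1"
  shows "suffix_prod (-1) lam
       = (2 * real n - 1) * (\<Prod>i\<in>{2..length lam}. 2 * real (\<Sum>j\<in>{i..length lam}. lam ! (j - 1)) - 1)"
proof -
  let ?F = "\<lambda>i. 2 * real (\<Sum>j\<in>{i..length lam}. lam ! (j - 1)) - 1"
  have "lam \<noteq> []" and sum: "sum_list lam = n"
    using assms by (auto simp: binary_partitions_def)
  have "suffix_prod (-1) lam = (\<Prod>i\<in>{1..length lam}. ?F i)"
    by (simp add: suffix_prod_eq_prod_suffix_sums)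
  also have "\<dots> = ?F 1 * (\<Prod>i\<in>{2..length lam}. ?F i)"
    unfolding Suc_1[symmetric] by (rule prod.atLeast_Suc_atMost) (simp add: Suc_le_eq \<open>lam \<noteq> []\<close>)
  also have "?F 1 = 2 * real n - 1"
    using sum sum_nth_pred_eq_sum_list[of lam] by simp
  finally show ?thesis .
qed

interpretation b: tree_recurrence "\<lambda>k. real (b k)"
proof
  show "real (b 0) = 0" by (simp add: b_0)
  show "real (b 1) = 1" by (metis b_1 of_nat_1)
next
  fix n :: nat assume "n \<ge> 2"
  from b_recurrence[OF this]
  have "real (2 * b n) = real ((\<Sum>k=0..n. b k * b (n - k)) + (if even n then b (n div 2) else 0))"
    by (rule arg_cong)
  thus "2 * real (b n) = (\<Sum>k=0..n. real (b k) * real (b (n - k)))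
      + (if even n then real (b (n div 2)) else 0)"
    by simp
qed

theorem theorem1p2:
  fixes n :: nat
  assumes "n \<ge> 1"
  shows "real (b n) =
    (\<Sum>lam\<in>binary_partitions n.
       (\<Prod>i\<in>{2..length lam}. 2 * real (\<Sum>j\<in>{i..length lam}. lam ! (j - 1)) - 1)
       / real (z lam))"
proof -
  have "(2 * real n - 1) * real (b n) = fps_nth (b.Wt (-1)) n"
    using assms by (rule b.Wt_minus_1_nth[symmetric])
  also have "\<dots> = partition_sum (-1) n"
    using partition_sum_0 partition_sum_recurrence by (rule b.recurrence_solution_eq_Wt_nth[symmetric])
  also have "\<dots> = (2 * real n - 1) *
      (\<Sum>lam\<in>binary_partitions n.
         (\<Prod>i\<in>{2..length lam}. 2 * real (\<Sum>j\<in>{i..length lam}. lam ! (j - 1)) - 1) / real (z lam))"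
    unfolding partition_sum_def sum_distrib_left
    by (intro sum.cong refl) (simp add: suffix_prod_minus_1[OF _ assms])
  finally show ?thesis
    using assms by simp
qed

end
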